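(* Let $\mathcal{L}_{\rm TM}$ be the Thue–Morse language and let ${\rm S}:\mathcal{L}_{\rm TM}\to\mathbb{N}$ be a homomorphism with $\gcd({\rm S}(a),{\rm S}(b))=1$. Then $\mathbb{N}\setminus{\rm S}(\mathcal{L}_{\rm TM})$ is infinite if and only if ${\rm S}(a)+{\rm S}(b)\ge6$. If ${\rm S}(a)+{\rm S}(b)<6$, then $\mathbb{N}\setminus{\rm S}(\mathcal{L}_{\rm TM})$ is either empty or a singleton.
   Context: $\mathbb{N}=\{1,2,3,\dots\}$. Let $\theta$ be the Thue–Morse morphism on $\{a,b\}$, $\theta(a)=ab$, $\theta(b)=ba$. The Thue–Morse language $\mathcal{L}_{\rm TM}$ is the set of all nonempty finite words occurring as factors of $\theta^n(a)$ for some $n\ge0$. A homomorphism ${\rm S}:\mathcal{L}_{\rm TM}\to\mathbb{N}$ is a map with ${\rm S}(w_1\cdots w_n)={\rm S}(w_1)+\cdots+{\rm S}(w_n)$, determined by ${\rm S}(a),{\rm S}(b)\in\mathbb{N}$. *)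

theory Defs
  imports Main "HOL-Library.Sublist"
begin

datatype letter = A | B

fun tm_morph :: "letter \<Rightarrow> letter list" where
  "tm_morph A = [A, B]"
| "tm_morph B = [B, A]"

definition theta :: "letter list \<Rightarrow> letter list" where
  "theta w = concat (map tm_morph w)"

definition L_TM :: "letter list set" where
  "L_TM = {w. w \<noteq> [] \<and> (\<exists>n. sublist w ((theta ^^ n) [A]))}"

definition S_hom :: "nat \<Rightarrow> nat \<Rightarrow> letter list \<Rightarrow> nat" where
  "S_hom sa sb w = sum_list (map (\<lambda>x. case x of A \<Rightarrow> sa | B \<Rightarrow> sb) w)"

end

theory Submission
  imports Defs "HOL-Library.Infinite_Set" "HOL-Number_Theory.Cong"
begin

text \<open>Since \<open>theta\<close> maps each letter to \<open>ab\<close> or \<open>ba\<close>, prefixes of Thue--Morse words have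
  at most one surplus letter, so a factor with \<open>k\<close> letters \<open>a\<close> and \<open>l\<close> letters \<open>b\<close> has
  \<open>|k - l| \<le> 2\<close>; conversely every such pair with \<open>k + l > 0\<close> is realised, by iterating
  \<open>theta\<close> on factors with prescribed end letters. Hence \<open>S(L_TM)\<close> consists of the positive
  numbers \<open>k sa + l sb = d sa + l (sa + sb)\<close> with \<open>d = k - l \<in> {-2..2}\<close> and \<open>l \<ge> max 0 (-d)\<close>.
  If \<open>sa + sb \<ge> 6\<close>, the five residues \<open>d sa\<close> miss a whole class modulo \<open>sa + sb\<close>. If
  \<open>sa + sb \<le> 5\<close> and \<open>sa\<close>, \<open>sb\<close> are coprime they cover all classes, and the only positive
  number left out is \<open>|sa - sb|\<close>.\<close>

fun flip :: "letter \<Rightarrow> letter" where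
  "flip A = B"
| "flip B = A"

lemma flip_flip [simp]: "flip (flip x) = x"
  by (cases x) simp_all

lemma flip_neq [simp]: "flip x \<noteq> x" "x \<noteq> flip x"
  by (cases x; simp)+

lemma tm_morph_eq: "tm_morph x = [x, flip x]"
  by (cases x) simp_all

lemma theta_Nil [simp]: "theta [] = []"
  and theta_Cons [simp]: "theta (x # w) = x # flip x # theta w"
  and theta_append [simp]: "theta (u @ v) = theta u @ theta v"
  by (simp_all add: theta_def tm_morph_eq)

lemma length_theta [simp]: "length (theta w) = 2 * length w"
  by (induction w) simp_all

lemma count_list_theta [simp]: "count_list (theta w) y = length w"
proof (induction w)
  case (Cons x w)
  then show ?case by (cases x; cases y) simp_all
qed simp

lemma length_eq_count_A_B: "length w = count_list w A + count_list w B"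
proof (induction w)
  case (Cons x w)
  then show ?case by (cases x) simp_all
qed simp

definition tm_factor :: "letter list \<Rightarrow> bool" where
  "tm_factor w \<longleftrightarrow> (\<exists>n. sublist w ((theta ^^ n) [A]))"

lemma L_TM_eq: "L_TM = {w. w \<noteq> [] \<and> tm_factor w}"
  by (simp add: L_TM_def tm_factor_def)

lemma tm_factor_sublist: "sublist v w \<Longrightarrow> tm_factor w \<Longrightarrow> tm_factor v"
  unfolding tm_factor_def using sublist_order.order_trans by blast

lemma tm_factor_infix: "tm_factor (u @ v @ w) \<Longrightarrow> tm_factor v"
  by (rule tm_factor_sublist[of _ "u @ v @ w"]) auto

lemma tm_factor_theta: "tm_factor w \<Longrightarrow> tm_factor (theta w)"
proof -
  assume "tm_factor w"
  then obtain n u v where "(theta ^^ n) [A] = u @ w @ v"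
    by (auto simp: tm_factor_def sublist_def)
  then have "(theta ^^ Suc n) [A] = theta u @ theta w @ theta v"
    by simp
  then show ?thesis
    unfolding tm_factor_def sublist_def by blast
qed

lemma tm_factor_length_two: "tm_factor [x, y]"
proof -
  have "sublist [x, y] [A, B, B, A, B, A, A, B]"
    by (cases x; cases y) (simp_all add: sublist_Cons_right)
  moreover have "(theta ^^ 3) [A] = [A, B, B, A, B, A, A, B]"
    by (simp add: numeral_3_eq_3)
  ultimately show ?thesis
    unfolding tm_factor_def by metis
qed

text \<open>Applying \<open>theta\<close> to a factor \<open>x u y\<close> yields the factors \<open>x (flip x) theta(u) y\<close>
  and \<open>x (flip x) theta(u) y (flip y)\<close>, so inner lengths \<open>m\<close> propagate to \<open>2m + 1\<close> and \<open>2m + 2\<close>.\<close>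
lemma tm_factor_with_ends: "\<exists>u. length u = m \<and> tm_factor (x # u @ [y])"
proof (induction m arbitrary: x y rule: less_induct)
  case (less m)
  show ?case
  proof (cases m)
    case 0
    then show ?thesis using tm_factor_length_two by simp
  next
    case (Suc m')
    define j where "j = m' div 2"
    have "m = 2 * j + 1 \<or> m = 2 * j + 2"
      using Suc unfolding j_def by presburger
    then show ?thesis
    proof
      assume 1: "m = 2 * j + 1"
      then obtain u where u: "length u = j" "tm_factor (x # u @ [y])"
        using less[of j x y] 1 by auto
      then have "tm_factor ([] @ (x # (flip x # theta u) @ [y]) @ [flip y])"
        using tm_factor_theta by fastforce
      then have "tm_factor (x # (flip x # theta u) @ [y])"
        by (rule tm_factor_infix)
      then show ?thesis
        using u 1 by (intro exI[of _ "flip x # theta u"]) simp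
    next
      assume 2: "m = 2 * j + 2"
      then obtain u where u: "length u = j" "tm_factor (x # u @ [flip y])"
        using less[of j x "flip y"] 2 by auto
      then have "tm_factor (x # (flip x # theta u @ [flip y]) @ [y])"
        using tm_factor_theta by fastforce
      then show ?thesis
        using u 2 by (intro exI[of _ "flip x # theta u @ [flip y]"]) simp
    qed
  qed
qed

definition excess :: "letter list \<Rightarrow> int" where
  "excess w = int (count_list w A) - int (count_list w B)"

lemma excess_Nil [simp]: "excess [] = 0"
  and excess_append [simp]: "excess (u @ v) = excess u + excess v"
  by (simp_all add: excess_def)

lemma excess_singleton: "\<bar>excess [x]\<bar> = 1"
  and excess_flip_pair: "excess [x, flip x] = 0"
  by (cases x; simp add: excess_def)+

lemma excess_prefix_theta: "prefix u (theta w) \<Longrightarrow> \<bar>excess u\<bar> \<le> 1"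
proof (induction w arbitrary: u)
  case (Cons x w)
  then have "prefix u ([x, flip x] @ theta w)"
    by simp
  then consider "prefix u [x, flip x]" | v where "u = [x, flip x] @ v" "prefix v (theta w)"
    unfolding prefix_append by blast
  then show ?case
  proof cases
    case 1
    then have "u = [] \<or> u = [x] \<or> u = [x, flip x]"
      by (auto simp: prefix_Cons)
    then show ?thesis
      using excess_singleton[of x] excess_flip_pair[of x] by auto
  next
    case 2
    then have "excess u = excess [x, flip x] + excess v"
      by (simp only: excess_append)
    then show ?thesis
      using 2 Cons.IH excess_flip_pair[of x] by simp
  qed
qed simp

lemma excess_tm_factor: "tm_factor w \<Longrightarrow> \<bar>excess w\<bar> \<le> 2"
proof -
  assume "tm_factor w"
  then obtain n where n: "sublist w ((theta ^^ n) [A])"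
    by (auto simp: tm_factor_def)
  show ?thesis
  proof (cases n)
    case 0
    then have "w = [] \<or> w = [A]"
      using n by (auto simp: sublist_Cons_right prefix_Cons)
    then show ?thesis using excess_singleton[of A] by auto
  next
    case (Suc n')
    then obtain u v where uv: "theta ((theta ^^ n') [A]) = u @ w @ v"
      using n by (auto simp: sublist_def)
    then have "\<bar>excess u\<bar> \<le> 1" "\<bar>excess (u @ w)\<bar> \<le> 1"
      by (metis excess_prefix_theta prefix_def append_assoc)+
    then show ?thesis by simp
  qed
qed

lemma tm_factor_counts_balanced:
  assumes "l > 0"
  shows "\<exists>w. tm_factor w \<and> count_list w A = l \<and> count_list w B = l"
proof -
  obtain u where u: "length u = l - 1" "tm_factor (A # u @ [A])"
    using tm_factor_with_ends by blast
  then have "tm_factor ([] @ theta (A # u) @ theta [A])"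
    using tm_factor_theta by (metis append_Cons append_Nil theta_append)
  then have "tm_factor (theta (A # u))"
    by (rule tm_factor_infix)
  then show ?thesis
    using u assms by (intro exI[of _ "theta (A # u)"]) simp
qed

text \<open>Both words are read off \<open>theta (flip x \<cdot> u \<cdot> x) = flip x \<cdot> x \<cdot> theta u \<cdot> x \<cdot> flip x\<close>.\<close>
lemma tm_factor_counts_surplus:
  assumes "d \<in> {1, 2}"
  shows "\<exists>w. tm_factor w \<and> count_list w x = l + d \<and> count_list w (flip x) = l"
proof -
  obtain u where u: "length u = l" "tm_factor (flip x # u @ [x])"
    using tm_factor_with_ends by blast
  then have f: "tm_factor ([flip x] @ (x # theta u @ [x]) @ [flip x])"
    using tm_factor_theta by fastforce
  show ?thesis
  proof (cases "d = 1")
    case True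
    have "tm_factor ([flip x] @ (x # theta u) @ [x, flip x])"
      using f by simp
    then have "tm_factor (x # theta u)"
      by (rule tm_factor_infix)
    then show ?thesis
      using u True by (intro exI[of _ "x # theta u"]) simp
  next
    case False
    then show ?thesis
      using u assms tm_factor_infix[OF f] by (intro exI[of _ "x # theta u @ [x]"]) auto
  qed
qed

lemma L_TM_letter_counts:
  "(\<exists>w\<in>L_TM. count_list w A = k \<and> count_list w B = l) \<longleftrightarrow> k \<le> l + 2 \<and> l \<le> k + 2 \<and> 0 < k + l"
proof
  assume "\<exists>w\<in>L_TM. count_list w A = k \<and> count_list w B = l"
  then obtain w where w: "w \<noteq> []" "tm_factor w" "count_list w A = k" "count_list w B = l"
    by (auto simp: L_TM_eq)
  have "\<bar>int k - int l\<bar> \<le> 2"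
    using excess_tm_factor[OF w(2)] w(3,4) by (simp add: excess_def)
  moreover have "0 < k + l"
    using w(1,3,4) length_eq_count_A_B[of w] by (metis length_greater_0_conv)
  ultimately show "k \<le> l + 2 \<and> l \<le> k + 2 \<and> 0 < k + l"
    by linarith
next
  assume kl: "k \<le> l + 2 \<and> l \<le> k + 2 \<and> 0 < k + l"
  have "\<exists>w. tm_factor w \<and> count_list w A = k \<and> count_list w B = l"
  proof -
    consider "k = l" | "k = l + 1" | "k = l + 2" | "l = k + 1" | "l = k + 2"
      using kl by linarith
    then show ?thesis
    proof cases
      case 1
      then show ?thesis using tm_factor_counts_balanced kl by simp
    next
      case 2
      then show ?thesis using tm_factor_counts_surplus[of 1 A l] by simp
    next
      case 3
      then show ?thesis using tm_factor_counts_surplus[of 2 A l] by simp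
    next
      case 4
      then show ?thesis using tm_factor_counts_surplus[of 1 B k] by auto
    next
      case 5
      then show ?thesis using tm_factor_counts_surplus[of 2 B k] by auto
    qed
  qed
  then obtain w where w: "tm_factor w" "count_list w A = k" "count_list w B = l"
    by blast
  then have "w \<noteq> []"
    using kl length_eq_count_A_B[of w] by auto
  then show "\<exists>w\<in>L_TM. count_list w A = k \<and> count_list w B = l"
    using w by (auto simp: L_TM_eq)
qed

lemma S_hom_eq_counts: "S_hom sa sb w = count_list w A * sa + count_list w B * sb"
proof (induction w)
  case (Cons x w)
  then show ?case by (cases x) (simp_all add: S_hom_def)
qed (simp add: S_hom_def)

definition balanced_sums :: "nat \<Rightarrow> nat \<Rightarrow> nat set" where
  "balanced_sums sa sb = {n. \<exists>k l. k \<le> l + 2 \<and> l \<le> k + 2 \<and> n = k * sa + l * sb}"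

lemma gaps_S_hom_L_TM: "{1..} - S_hom sa sb ` L_TM = {1..} - balanced_sums sa sb"
proof -
  have "n \<in> S_hom sa sb ` L_TM \<longleftrightarrow> n \<in> balanced_sums sa sb" if n: "1 \<le> n" for n
  proof -
    have "n \<in> S_hom sa sb ` L_TM \<longleftrightarrow>
        (\<exists>k l. (\<exists>w\<in>L_TM. count_list w A = k \<and> count_list w B = l) \<and> n = k * sa + l * sb)"
      by (auto simp: S_hom_eq_counts)
    also have "\<dots> \<longleftrightarrow> (\<exists>k l. k \<le> l + 2 \<and> l \<le> k + 2 \<and> 0 < k + l \<and> n = k * sa + l * sb)"
      by (simp only: L_TM_letter_counts conj_assoc)
    also have "\<dots> \<longleftrightarrow> n \<in> balanced_sums sa sb"
    proof
      assume "n \<in> balanced_sums sa sb"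
      then obtain k l where kl: "k \<le> l + 2" "l \<le> k + 2" "n = k * sa + l * sb"
        by (auto simp: balanced_sums_def)
      moreover have "0 < k + l"
        using n kl(3) by (cases "k + l = 0") auto
      ultimately show "\<exists>k l. k \<le> l + 2 \<and> l \<le> k + 2 \<and> 0 < k + l \<and> n = k * sa + l * sb"
        by blast
    qed (auto simp: balanced_sums_def)
    finally show ?thesis .
  qed
  then show ?thesis by auto
qed

lemma balanced_sums_iff:
  "n \<in> balanced_sums sa sb \<longleftrightarrow>
    (\<exists>d\<in>{-2..2}. \<exists>l. max 0 (-d) \<le> l \<and> int n = d * int sa + l * int (sa + sb))"
proof
  assume "n \<in> balanced_sums sa sb"
  then obtain k l where kl: "k \<le> l + 2" "l \<le> k + 2" "n = k * sa + l * sb"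
    by (auto simp: balanced_sums_def)
  then have "int n = (int k - int l) * int sa + int l * int (sa + sb)"
    by (simp add: algebra_simps)
  moreover have "int k - int l \<in> {-2..2}"
    using kl(1,2) by auto
  ultimately show "\<exists>d\<in>{-2..2}. \<exists>l. max 0 (-d) \<le> l \<and> int n = d * int sa + l * int (sa + sb)"
    by (intro bexI[of _ "int k - int l"] exI[of _ "int l"]) auto
next
  assume "\<exists>d\<in>{-2..2}. \<exists>l. max 0 (-d) \<le> l \<and> int n = d * int sa + l * int (sa + sb)"
  then obtain d l where d: "d \<in> {-2..2}" "max 0 (-d) \<le> l"
    and n: "int n = d * int sa + l * int (sa + sb)"
    by blast
  have "int (nat (l + d) * sa + nat l * sb) = int n"
    using d n by (simp add: algebra_simps)
  then have "n = nat (l + d) * sa + nat l * sb"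
    by (simp only: int_int_eq)
  moreover have "nat (l + d) \<le> nat l + 2" "nat l \<le> nat (l + d) + 2"
    using d by auto
  ultimately show "n \<in> balanced_sums sa sb"
    unfolding balanced_sums_def by blast
qed

lemma infinite_gaps_balanced_sums:
  assumes "sa + sb \<ge> 6"
  shows "infinite ({1..} - balanced_sums sa sb)"
proof -
  define N where "N = int (sa + sb)"
  define R where "R = (\<lambda>d. d * int sa mod N) ` {-2..2}"
  have "card R \<le> card {-2..2::int}"
    unfolding R_def by (rule card_image_le) simp
  also have "\<dots> < card {0..<N}"
    using assms by (simp add: N_def)
  finally have "\<not> {0..<N} \<subseteq> R"
    using card_mono[of R "{0..<N}"] by (auto simp: R_def)
  then obtain r where r: "r \<in> {0..<N}" "r \<notin> R"
    by blast
  define f where "f j = nat r + (sa + sb) * Suc j" for j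
  have "f j \<notin> balanced_sums sa sb" for j
  proof
    assume "f j \<in> balanced_sums sa sb"
    then obtain d l where "d \<in> {-2..2}" "int (f j) = d * int sa + l * N"
      unfolding balanced_sums_iff N_def by blast
    then have "int (f j) mod N \<in> R"
      by (auto simp: R_def)
    moreover have "int (f j) = r + int (Suc j) * N"
      using r(1) by (simp add: f_def N_def algebra_simps)
    then have "int (f j) mod N = r"
      using r(1) by simp
    ultimately show False
      using r(2) by simp
  qed
  moreover have "f j \<ge> 1" for j
    using assms by (simp add: f_def)
  ultimately have "range f \<subseteq> {1..} - balanced_sums sa sb"
    by auto
  moreover have "inj f"
    using assms by (auto simp: inj_def f_def)
  ultimately show ?thesis
    using infinite_super range_inj_infinite by blast
qed

text \<open>A modulus \<open>N \<le> 5\<close> has all its residues among \<open>-2, \<dots>, 2\<close>; multiplication by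
  a unit permutes them.\<close>
lemma residues_cover_small_modulus:
  fixes a N r :: int
  assumes "coprime a N" "0 < N" "N \<le> 5"
  shows "\<exists>d\<in>{-2..2}. [r = d * a] (mod N)"
proof -
  obtain x where x: "[a * x = 1] (mod N)"
    using cong_solve_coprime_int assms(1) by blast
  define e where "e = r * x mod N"
  define d where "d = (if e \<le> 2 then e else e - N)"
  have e: "0 \<le> e" "e < N"
    using assms(2) by (simp_all add: e_def)
  then have "d \<in> {-2..2}"
    using assms(3) by (auto simp: d_def)
  have "[d = r * x] (mod N)"
    by (simp add: d_def e_def cong_def)
  then have "[d * a = r * (a * x)] (mod N)"
    using cong_scalar_right[of d "r * x" N a] by (simp add: ac_simps)
  also have "[r * (a * x) = r * 1] (mod N)"
    using x by (rule cong_scalar_left)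
  finally show ?thesis
    using \<open>d \<in> {-2..2}\<close> by (auto intro: cong_sym)
qed

lemma small_representation_eq_abs_diff:
  fixes a b d l n :: int
  assumes "d \<in> {-2..2}" "l < max 0 (-d)" "1 \<le> n" "n = d * a + l * (a + b)" "0 \<le> a" "0 \<le> b"
  shows "n = \<bar>a - b\<bar>"
proof -
  have "l \<le> -2 \<or> l \<in> {-1..1}"
    using assms(1,2) by auto
  then show ?thesis
  proof
    assume "l \<le> -2"
    then have "l * (a + b) \<le> -2 * (a + b)"
      using assms(5,6) by (intro mult_right_mono) auto
    moreover have "d * a \<le> 2 * a"
      using assms(1,5) by (intro mult_right_mono) auto
    ultimately have False
      using assms(3-6) by (smt (verit))
    then show ?thesis ..
  next
    assume "l \<in> {-1..1}"
    then have "l = -1 \<or> l = 0 \<or> l = 1"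
      by auto
    moreover have "d = -2 \<or> d = -1 \<or> d = 0 \<or> d = 1 \<or> d = 2"
      using assms(1) by auto
    ultimately show ?thesis
      using assms(2-6) by auto
  qed
qed

lemma gaps_balanced_sums_small_period:
  assumes "sa + sb \<le> 5" "gcd sa sb = 1"
  shows "{1..} - balanced_sums sa sb \<subseteq> {nat \<bar>int sa - int sb\<bar>}"
proof
  fix n
  assume n: "n \<in> {1..} - balanced_sums sa sb"
  define N where "N = int (sa + sb)"
  have "coprime (int sa) N"
    using assms(2) by (simp add: N_def coprime_iff_gcd_eq_1)
  moreover have "0 < N"
    using assms(2) by (cases "sa = 0") (auto simp: N_def)
  moreover have "N \<le> 5"
    using assms(1) by (simp add: N_def)
  ultimately obtain d where d: "d \<in> {-2..2}" "[d * int sa = int n] (mod N)"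
    using residues_cover_small_modulus cong_sym by blast
  then obtain l where l: "int n = d * int sa + l * N"
    unfolding cong_iff_lin by (auto simp: mult.commute)
  have "l < max 0 (-d)"
  proof (rule ccontr)
    assume "\<not> l < max 0 (-d)"
    then have "n \<in> balanced_sums sa sb"
      using d(1) l unfolding balanced_sums_iff N_def by (intro bexI[of _ d] exI[of _ l]) auto
    then show False
      using n by simp
  qed
  then have "int n = \<bar>int sa - int sb\<bar>"
    using small_representation_eq_abs_diff d(1) n l by (simp add: N_def)
  then show "n \<in> {nat \<bar>int sa - int sb\<bar>}"
    by simp
qed

theorem theorem8:
  fixes sa sb :: nat
  assumes "sa \<ge> 1" and "sb \<ge> 1" and "gcd sa sb = 1"
  shows "(infinite ({1..} - S_hom sa sb ` L_TM) \<longleftrightarrow> sa + sb \<ge> 6)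
       \<and> (sa + sb < 6 \<longrightarrow>
            ({1..} - S_hom sa sb ` L_TM = {} \<or> (\<exists>m. {1..} - S_hom sa sb ` L_TM = {m})))"
proof (cases "sa + sb \<ge> 6")
  case True
  then show ?thesis
    unfolding gaps_S_hom_L_TM using infinite_gaps_balanced_sums by simp
next
  case False
  then have gaps: "{1..} - balanced_sums sa sb \<subseteq> {nat \<bar>int sa - int sb\<bar>}"
    using gaps_balanced_sums_small_period assms(3) by simp
  then have "finite ({1..} - balanced_sums sa sb)"
    by (rule finite_subset) simp
  moreover have "{1..} - balanced_sums sa sb = {} \<or> (\<exists>m. {1..} - balanced_sums sa sb = {m})"
    using gaps unfolding subset_singleton_iff by blast
  ultimately show ?thesis
    unfolding gaps_S_hom_L_TM using False by simp
qed

end
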